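(* Let $1 \le r \le n/2$ be integers and let $A$ be the adjacency matrix of the subgraph of the Hamming cube $\{0,1\}^n$ induced by $S(n,r-1)\cup S(n,r)$. Then: (i) For each $0 \le t \le r-1$, $A$ has a pair of eigenvalues $\pm\gamma_t$, where $\gamma_t = \sqrt{(r-t)(n-r-t+1)}$, each of multiplicity $\binom{n}{t}-\binom{n}{t-1}$ (with $\binom{n}{-1}:=0$). In addition $A$ has eigenvalue $0$ with multiplicity $\binom{n}{r}-\binom{n}{r-1}$. (ii) Given $0\le t\le r-1$ and $\lambda\in\{-\gamma_t,\gamma_t\}$, the eigenspace $W_t(\lambda)$ of $A$ corresponding to this pair $(t,\lambda)$ is described as follows: for $f \in W_t(\lambda)$ with restrictions $f_{r-1}, f_r$ to $S(n,r-1)$ and $S(n,r)$, the function $f_{r-1}$ can be chosen arbitrarily in the $t$-th eigenspace $V_t$ of $S(n,r-1)$, in which case $f_r$ is determined by $f_r(x) = \frac{1}{\lambda}\sum_{|y|=r-1,\ y\subset x} f_{r-1}(y)$; furthermore $f_r$ lies in the $t$-th eigenspace $V_t$ of $S(n,r)$. (iii) The eigenspace $W(0)$ corresponding to the eigenvalue $0$ contains the functions which vanish on $S(n,r-1)$ and whose restriction to $S(n,r)$ lies in the $r$-th eigenspace $V_r$ of $S(n,r)$.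
   Context: $\{0,1\}^n$ is the Hamming cube (vertices adjacent iff Hamming distance $1$); points are identified with subsets of $\{1,\dots,n\}$, and $|x|$ is the weight. $S(n,i)=\{x:|x|=i\}$ with inner product $\langle f,g\rangle=\sum_{x\in S(n,i)}f(x)g(x)$. For $|z|\le i$, $g_z$ on $S(n,i)$ is $1$ at $x$ if $z\subseteq x$ and $0$ otherwise; $U_j=\mathrm{span}\{g_z:|z|\le j\}$; the eigenspaces of $S(n,i)$ are $V_0=U_0$ (constants) and $V_j=U_j\cap U_{j-1}^\perp$ for $1\le j\le i$. *)

theory Defs
  imports Complex_Main "HOL-Library.Function_Algebras"
begin

text \<open>Points of the Hamming cube {0,1}^n are subsets of {1..n}.
  Real functions on a finite vertex set are modelled as functions
  nat set => real that vanish outside that set.\<close>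

definition layer :: "nat \<Rightarrow> nat \<Rightarrow> nat set set"  (\<open>S'(_,_')\<close>) where
  "layer n i = {x. x \<subseteq> {1..n} \<and> card x = i}"

definition cube_adj :: "nat set \<Rightarrow> nat set \<Rightarrow> bool" where
  "cube_adj x y \<longleftrightarrow> card ((x - y) \<union> (y - x)) = 1"

definition fscale :: "real \<Rightarrow> ('a \<Rightarrow> real) \<Rightarrow> ('a \<Rightarrow> real)" where
  "fscale c f = (\<lambda>x. c * f x)"

lemma vector_space_fscale: "vector_space (fscale :: real \<Rightarrow> ('a \<Rightarrow> real) \<Rightarrow> _)"
  by unfold_locales (auto simp: fscale_def algebra_simps plus_fun_def)

abbreviation fspan :: "('a \<Rightarrow> real) set \<Rightarrow> ('a \<Rightarrow> real) set" where
  "fspan \<equiv> module.span fscale"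

abbreviation fdim :: "('a \<Rightarrow> real) set \<Rightarrow> nat" where
  "fdim \<equiv> vector_space.dim fscale"

definition funs_on :: "'a set \<Rightarrow> ('a \<Rightarrow> real) set" where
  "funs_on X = {f. \<forall>x. x \<notin> X \<longrightarrow> f x = 0}"

definition restr :: "('a \<Rightarrow> real) \<Rightarrow> 'a set \<Rightarrow> ('a \<Rightarrow> real)" where
  "restr f X = (\<lambda>x. if x \<in> X then f x else 0)"

definition lay_inner :: "nat \<Rightarrow> nat \<Rightarrow> (nat set \<Rightarrow> real) \<Rightarrow> (nat set \<Rightarrow> real) \<Rightarrow> real" where
  "lay_inner n i f g = (\<Sum>x\<in>layer n i. f x * g x)"

definition gz :: "nat \<Rightarrow> nat \<Rightarrow> nat set \<Rightarrow> (nat set \<Rightarrow> real)" where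
  "gz n i z = (\<lambda>x. if x \<in> layer n i \<and> z \<subseteq> x then 1 else 0)"

definition Usp :: "nat \<Rightarrow> nat \<Rightarrow> nat \<Rightarrow> (nat set \<Rightarrow> real) set" where
  "Usp n i j = fspan {gz n i z | z. z \<subseteq> {1..n} \<and> card z \<le> j}"

definition orth_compl :: "nat \<Rightarrow> nat \<Rightarrow> (nat set \<Rightarrow> real) set \<Rightarrow> (nat set \<Rightarrow> real) set" where
  "orth_compl n i U = {f \<in> funs_on (layer n i). \<forall>g\<in>U. lay_inner n i f g = 0}"

text \<open>Eigenspaces V_j of S(n,i): V_0 = U_0, V_j = U_j \<inter> U_{j-1}^\<perp>.\<close>
definition Vsp :: "nat \<Rightarrow> nat \<Rightarrow> nat \<Rightarrow> (nat set \<Rightarrow> real) set" where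
  "Vsp n i j = (if j = 0 then Usp n i 0 else Usp n i j \<inter> orth_compl n i (Usp n i (j - 1)))"

definition adj_op :: "nat set set \<Rightarrow> (nat set \<Rightarrow> real) \<Rightarrow> (nat set \<Rightarrow> real)" where
  "adj_op X f = (\<lambda>x. if x \<in> X then (\<Sum>y\<in>{y\<in>X. cube_adj x y}. f y) else 0)"

definition eigsp :: "nat set set \<Rightarrow> real \<Rightarrow> (nat set \<Rightarrow> real) set" where
  "eigsp X lam = {f \<in> funs_on X. adj_op X f = fscale lam f}"

end

(* The graph is bipartite with parts S(n,r-1) and S(n,r), and its adjacency operator is U + D,
   where U (up) sums a function on S(n,i) over the i-subsets of a point of S(n,i+1) and D (down)
   is its adjoint.  So f = P + Q is an eigenfunction for lam iff U P = lam Q and D Q = lam P.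
   On S(n,i+1) the commutation relation  D U = U D + (n - 2(i+1))  holds, and induction on i
   shows that D U acts on V_t as the scalar (i+1-t)(n-i-t); these scalars are distinct for
   t <= i < n/2.  Hence for lam <> 0, P is an eigenvector of D U, i.e. P lies in V_t with
   lam^2 = (r-t)(n-r-t+1), and Q = U P / lam.  For lam = 0, P = 0 since U is injective below
   the middle layer, and D Q = 0 says that Q is orthogonal to U_{r-1}, i.e. Q lies in V_r.
   The multiplicities follow from dim U_j = binomial n j, because U maps U_j on S(n,i)
   isomorphically onto U_j on S(n,i+1) for i < n/2. *)

theory Submission
  imports Defs
begin

interpretation fs: vector_space "fscale :: real \<Rightarrow> ('a \<Rightarrow> real) \<Rightarrow> _"
  by (rule vector_space_fscale)

lemma fscale_apply [simp]: "fscale c f x = c * f x"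
  by (simp add: fscale_def)

lemma sum_fun_apply: "(\<Sum>x\<in>A. h x) w = (\<Sum>x\<in>A. h x w)"
  by (induction A rule: infinite_finite_induct) auto

lemma finite_layer [simp]: "finite (layer n i)"
  unfolding layer_def by (rule finite_subset[of _ "Pow {1..n}"]) auto

lemma card_layer: "card (layer n i) = n choose i"
  unfolding layer_def using n_subsets[of "{1..n}" i] by simp

lemma layer_iff: "x \<in> layer n i \<longleftrightarrow> x \<subseteq> {1..n} \<and> card x = i"
  by (simp add: layer_def)

lemma finite_of_in_layer: "x \<in> layer n i \<Longrightarrow> finite x"
  unfolding layer_def using finite_subset by auto

lemma le_of_in_layer: "x \<in> layer n i \<Longrightarrow> i \<le> n"
  by (metis card_atLeastAtMost card_mono diff_Suc_1 finite_atLeastAtMost layer_iff)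

lemma layer_disjoint: "i \<noteq> j \<Longrightarrow> x \<in> layer n i \<Longrightarrow> x \<notin> layer n j"
  by (simp add: layer_def)

lemma layer_Int_layer_Suc: "layer n i \<inter> layer n (Suc i) = {}"
  by (auto simp: layer_def)

lemma layer_0: "layer n 0 = {{}}"
proof (intro set_eqI iffI)
  fix x assume "x \<in> layer n 0"
  then show "x \<in> {{}}"
    using finite_subset[of x "{1..n}"] by (auto simp: layer_iff)
qed (simp add: layer_iff)

lemma subset_in_layer_eq:
  assumes "x \<in> layer n i" "y \<in> layer n i" "x \<subseteq> y"
  shows "x = y"
  using assms card_subset_eq[of y x] finite_of_in_layer[of y] by (auto simp: layer_iff)

lemma supersets_in_next_layer:
  assumes y: "y \<in> layer n i"
  shows "{x \<in> layer n (Suc i). y \<subseteq> x \<and> P x} = (\<lambda>a. insert a y) ` {a \<in> {1..n} - y. P (insert a y)}"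
proof (intro equalityI subsetI)
  fix x assume x: "x \<in> {x \<in> layer n (Suc i). y \<subseteq> x \<and> P x}"
  have "card (x - y) = 1"
    using x y finite_of_in_layer[OF y] by (simp add: card_Diff_subset layer_iff)
  then obtain a where a: "x - y = {a}" by (auto simp: card_Suc_eq)
  with x have "x = insert a y" by auto
  with x a show "x \<in> (\<lambda>a. insert a y) ` {a \<in> {1..n} - y. P (insert a y)}"
    by (auto simp: layer_iff)
next
  fix x assume "x \<in> (\<lambda>a. insert a y) ` {a \<in> {1..n} - y. P (insert a y)}"
  then show "x \<in> {x \<in> layer n (Suc i). y \<subseteq> x \<and> P x}"
    using y finite_of_in_layer[OF y] by (auto simp: layer_iff)
qed

lemma subsets_in_prev_layer:
  assumes x: "x \<in> layer n (Suc i)"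
  shows "{y \<in> layer n i. y \<subseteq> x \<and> P y} = (\<lambda>a. x - {a}) ` {a \<in> x. P (x - {a})}"
proof (intro equalityI subsetI)
  fix y assume y: "y \<in> {y \<in> layer n i. y \<subseteq> x \<and> P y}"
  have "card (x - y) = 1"
    using x y finite_of_in_layer[of y] by (auto simp: card_Diff_subset layer_iff)
  then obtain a where a: "x - y = {a}" by (auto simp: card_Suc_eq)
  with y have "y = x - {a}" by auto
  with y a show "y \<in> (\<lambda>a. x - {a}) ` {a \<in> x. P (x - {a})}"
    by auto
next
  fix y assume "y \<in> (\<lambda>a. x - {a}) ` {a \<in> x. P (x - {a})}"
  then show "y \<in> {y \<in> layer n i. y \<subseteq> x \<and> P y}"
    using x finite_of_in_layer[OF x] by (auto simp: layer_iff)
qed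

lemma card_supersets_in_next_layer:
  assumes y: "y \<in> layer n i"
  shows "card {x \<in> layer n (Suc i). y \<subseteq> x} = n - i"
proof -
  have "card {x \<in> layer n (Suc i). y \<subseteq> x} = card ((\<lambda>a. insert a y) ` ({1..n} - y))"
    using supersets_in_next_layer[OF y, of "\<lambda>_. True"] by (simp only: simp_thms Collect_mem_eq)
  also have "\<dots> = card ({1..n} - y)"
    by (rule card_image) (auto simp: inj_on_def)
  also have "\<dots> = n - i"
    using y finite_of_in_layer[OF y] by (simp add: layer_iff card_Diff_subset)
  finally show ?thesis .
qed

lemma card_subsets_in_prev_layer:
  assumes x: "x \<in> layer n (Suc i)"
  shows "card {y \<in> layer n i. y \<subseteq> x} = Suc i"
proof -
  have "card {y \<in> layer n i. y \<subseteq> x} = card ((\<lambda>a. x - {a}) ` x)"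
    using subsets_in_prev_layer[OF x, of "\<lambda>_. True"] by (simp only: simp_thms Collect_mem_eq)
  also have "\<dots> = card x"
    by (rule card_image) (auto simp: inj_on_def)
  finally show ?thesis
    using x by (simp add: layer_iff)
qed

lemma card_layer_supersets:
  assumes "A \<subseteq> {1..n}" "m \<le> card A"
  shows "card {x \<in> layer n m. A \<subseteq> x} = (if card A = m then 1 else 0)"
proof -
  have "card A \<le> card x" "card A = card x \<Longrightarrow> A = x" if "x \<in> layer n m" "A \<subseteq> x" for x
    using that finite_of_in_layer card_mono card_subset_eq by metis+
  then have "{x \<in> layer n m. A \<subseteq> x} = (if card A = m then {A} else {})"
    using assms by (auto simp: layer_iff)
  then show ?thesis by simp
qed

lemma card_layer_subsets:
  assumes "B \<subseteq> {1..n}" "card B \<le> m"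
  shows "card {v \<in> layer n m. v \<subseteq> B} = (if card B = m then 1 else 0)"
proof -
  have "finite B" using assms(1) finite_subset by blast
  then have "card v \<le> card B" "card v = card B \<Longrightarrow> v = B" if "v \<subseteq> B" for v
    using that card_mono card_subset_eq by metis+
  then have "{v \<in> layer n m. v \<subseteq> B} = (if card B = m then {B} else {})"
    using assms by (auto simp: layer_iff) (use le_antisym in fastforce)
  then show ?thesis by simp
qed

section \<open>Functions on a layer and the subspaces U_j, V_t\<close>

lemma subspace_funs_on: "fs.subspace (funs_on X)"
  by (auto simp: fs.subspace_def funs_on_def)

lemma span_funs_on: "G \<subseteq> funs_on X \<Longrightarrow> fs.span G \<subseteq> funs_on X"
  by (rule fs.span_minimal) (auto simp: subspace_funs_on)

lemma funs_on_eqI: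
  assumes "f \<in> funs_on X" "g \<in> funs_on X" "\<And>x. x \<in> X \<Longrightarrow> f x = g x"
  shows "f = g"
proof
  fix x show "f x = g x"
    using assms by (cases "x \<in> X") (auto simp: funs_on_def)
qed

lemma restr_funs_on: "restr f X \<in> funs_on X"
  by (simp add: restr_def funs_on_def)

lemma restr_eq_self: "f \<in> funs_on X \<Longrightarrow> restr f X = f"
  by (auto simp: restr_def funs_on_def)

lemma gz_funs_on: "gz n i z \<in> funs_on (layer n i)"
  by (simp add: gz_def funs_on_def)

lemma gz_on_layer: "x \<in> layer n i \<Longrightarrow> w \<in> layer n i \<Longrightarrow> gz n i x w = (if w = x then 1 else 0)"
  using subset_in_layer_eq[of x n i w] by (auto simp: gz_def)

lemma funs_on_layer_eq_sum_gz:
  assumes "f \<in> funs_on (layer n i)"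
  shows "f = (\<Sum>x\<in>layer n i. fscale (f x) (gz n i x))"
proof (rule funs_on_eqI[OF assms])
  show "(\<Sum>x\<in>layer n i. fscale (f x) (gz n i x)) \<in> funs_on (layer n i)"
    by (auto simp: funs_on_def sum_fun_apply gz_def)
  fix w assume w: "w \<in> layer n i"
  have "(\<Sum>x\<in>layer n i. fscale (f x) (gz n i x)) w = (\<Sum>x\<in>layer n i. if x = w then f w else 0)"
    unfolding sum_fun_apply using w by (intro sum.cong) (auto simp: gz_on_layer)
  also have "\<dots> = f w"
    using w by simp
  finally show "f w = (\<Sum>x\<in>layer n i. fscale (f x) (gz n i x)) w" ..
qed

lemma finite_gz_generators: "finite {gz n i z | z. z \<subseteq> {1..n} \<and> card z \<le> j}"
proof -
  have "{gz n i z | z. z \<subseteq> {1..n} \<and> card z \<le> j} \<subseteq> gz n i ` Pow {1..n}" by auto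
  then show ?thesis by (rule finite_subset) auto
qed

lemma gz_generators_funs_on: "{gz n i z | z. z \<subseteq> {1..n} \<and> card z \<le> j} \<subseteq> funs_on (layer n i)"
  using gz_funs_on by auto

lemma Usp_funs_on: "Usp n i j \<subseteq> funs_on (layer n i)"
  unfolding Usp_def using gz_generators_funs_on by (rule span_funs_on)

lemma subspace_Usp: "fs.subspace (Usp n i j)"
  unfolding Usp_def by simp

lemma Usp_mono: "j \<le> k \<Longrightarrow> Usp n i j \<subseteq> Usp n i k"
  unfolding Usp_def by (rule fs.span_mono) auto

lemma Usp_full: "i \<le> j \<Longrightarrow> Usp n i j = funs_on (layer n i)"
proof (intro equalityI subsetI)
  fix f assume "i \<le> j" "f \<in> funs_on (layer n i)"
  moreover have "(\<Sum>x\<in>layer n i. fscale (f x) (gz n i x)) \<in> Usp n i j"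
    unfolding Usp_def
    by (intro fs.span_sum fs.span_scale fs.span_base) (use \<open>i \<le> j\<close> in \<open>auto simp: layer_iff\<close>)
  ultimately show "f \<in> Usp n i j"
    using funs_on_layer_eq_sum_gz by metis
qed (use Usp_funs_on in blast)

lemma dim_funs_on_layer: "fdim (funs_on (layer n i)) = n choose i"
proof -
  let ?B = "gz n i ` layer n i"
  have inj: "inj_on (gz n i) (layer n i)"
    by (rule inj_onI) (metis gz_on_layer zero_neq_one)
  have "fs.independent ?B"
    unfolding fs.dependent_def
  proof
    assume "\<exists>a\<in>?B. a \<in> fs.span (?B - {a})"
    then obtain x where x: "x \<in> layer n i" "gz n i x \<in> fs.span (?B - {gz n i x})" by blast
    have "?B - {gz n i x} \<subseteq> {f. f x = 0}"
      using x(1) gz_on_layer by auto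
    moreover have "fs.subspace {f. f x = 0}"
      by (auto simp: fs.subspace_def)
    ultimately have "fs.span (?B - {gz n i x}) \<subseteq> {f. f x = 0}"
      by (rule fs.span_minimal)
    with x show False
      using gz_on_layer[OF x(1) x(1)] by auto
  qed
  moreover have "funs_on (layer n i) \<subseteq> fs.span ?B"
  proof
    fix f assume "f \<in> funs_on (layer n i)"
    moreover have "(\<Sum>x\<in>layer n i. fscale (f x) (gz n i x)) \<in> fs.span ?B"
      by (intro fs.span_sum fs.span_scale fs.span_base) auto
    ultimately show "f \<in> fs.span ?B"
      using funs_on_layer_eq_sum_gz by metis
  qed
  moreover have "?B \<subseteq> funs_on (layer n i)"
    using gz_funs_on by auto
  ultimately have "card ?B = fdim (funs_on (layer n i))"
    using fs.basis_card_eq_dim by blast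
  then show ?thesis
    using card_image[OF inj] card_layer by simp
qed

lemma lay_inner_sym: "lay_inner n i f g = lay_inner n i g f"
  by (simp add: lay_inner_def mult.commute)

lemma lay_inner_add_left: "lay_inner n i (f + h) g = lay_inner n i f g + lay_inner n i h g"
  by (simp add: lay_inner_def algebra_simps sum.distrib)

lemma lay_inner_add_right: "lay_inner n i g (f + h) = lay_inner n i g f + lay_inner n i g h"
  by (simp add: lay_inner_def algebra_simps sum.distrib)

lemma lay_inner_diff_left: "lay_inner n i (f - h) g = lay_inner n i f g - lay_inner n i h g"
  by (simp add: lay_inner_def algebra_simps sum_subtractf)

lemma lay_inner_scale_left: "lay_inner n i (fscale c f) g = c * lay_inner n i f g"
  by (simp add: lay_inner_def sum_distrib_left algebra_simps)

lemma lay_inner_scale_right: "lay_inner n i g (fscale c f) = c * lay_inner n i g f"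
  by (simp add: lay_inner_def sum_distrib_left algebra_simps)

lemma lay_inner_zero_left [simp]: "lay_inner n i 0 g = 0"
  by (simp add: lay_inner_def)

lemma lay_inner_zero_right [simp]: "lay_inner n i g 0 = 0"
  by (simp add: lay_inner_def)

lemma lay_inner_self_nonneg: "lay_inner n i f f \<ge> 0"
  by (simp add: lay_inner_def sum_nonneg)

lemma lay_inner_self_eq_0_iff:
  assumes "f \<in> funs_on (layer n i)"
  shows "lay_inner n i f f = 0 \<longleftrightarrow> f = 0"
proof
  assume "lay_inner n i f f = 0"
  then have "\<forall>x\<in>layer n i. f x * f x = 0"
    unfolding lay_inner_def by (subst (asm) sum_nonneg_eq_0_iff) auto
  then show "f = 0"
    using assms by (intro funs_on_eqI) (auto simp: funs_on_def)
qed (simp add: lay_inner_def)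

lemma lay_inner_orthogonal_span:
  assumes "\<forall>g\<in>G. lay_inner n i f g = 0" "g \<in> fs.span G"
  shows "lay_inner n i f g = 0"
proof -
  have "fs.subspace {g. lay_inner n i f g = 0}"
    by (auto simp: fs.subspace_def lay_inner_add_right lay_inner_scale_right)
  then have "fs.span G \<subseteq> {g. lay_inner n i f g = 0}"
    using assms(1) by (intro fs.span_minimal) auto
  then show ?thesis using assms(2) by auto
qed

lemma orthogonal_projection_exists:
  assumes "finite G" "G \<subseteq> funs_on (layer n i)"
  shows "\<exists>a\<in>fs.span G. \<forall>g\<in>G. lay_inner n i (f - a) g = 0"
  using assms
proof (induction G arbitrary: f rule: finite_induct)
  case empty
  then show ?case using fs.span_zero[of "{}"] by blast
next
  case (insert g G)
  have G: "G \<subseteq> funs_on (layer n i)" and g: "g \<in> funs_on (layer n i)"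
    using insert.prems by auto
  obtain a where a: "a \<in> fs.span G" "\<forall>h\<in>G. lay_inner n i (f - a) h = 0"
    using insert.IH[OF G] by blast
  obtain ag where ag: "ag \<in> fs.span G" "\<forall>h\<in>G. lay_inner n i (g - ag) h = 0"
    using insert.IH[OF G] by blast
  define b where "b = g - ag"
  have span_G: "fs.span G \<subseteq> fs.span (insert g G)"
    by (rule fs.span_mono) auto
  have b_span: "b \<in> fs.span (insert g G)"
    unfolding b_def by (rule fs.span_diff) (use ag(1) span_G in \<open>auto intro: fs.span_base\<close>)
  have b_funs: "b \<in> funs_on (layer n i)"
    using g span_funs_on[OF G] ag(1) fs.subspace_diff[OF subspace_funs_on] unfolding b_def by blast
  \<comment> \<open>b is g minus its projection onto span G; adding the right multiple of b to a makes
    f - a' orthogonal to b as well as to G, hence to g = ag + b.\<close>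
  define a' where "a' = a + fscale (lay_inner n i (f - a) b / lay_inner n i b b) b"
  have a'_span: "a' \<in> fs.span (insert g G)"
    unfolding a'_def using span_G a(1) b_span by (intro fs.span_add fs.span_scale) auto
  have orth_G: "\<forall>h\<in>G. lay_inner n i (f - a') h = 0"
    using a(2) ag(2) by (simp add: a'_def b_def diff_add_eq_diff_diff_swap
        lay_inner_diff_left lay_inner_scale_left)
  have "lay_inner n i (f - a') b = 0"
  proof (cases "b = 0")
    case False
    then have "lay_inner n i b b \<noteq> 0"
      using lay_inner_self_eq_0_iff[OF b_funs] by simp
    then show ?thesis
      by (simp add: a'_def diff_add_eq_diff_diff_swap lay_inner_diff_left lay_inner_scale_left)
  qed simp
  moreover have "lay_inner n i (f - a') ag = 0"
    using lay_inner_orthogonal_span[OF orth_G ag(1)] .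
  moreover have "g = ag + b"
    by (simp add: b_def)
  ultimately have "lay_inner n i (f - a') g = 0"
    by (simp add: lay_inner_add_right)
  with orth_G a'_span show ?case by blast
qed

lemma subspace_orth_compl: "fs.subspace (orth_compl n i U)"
  by (auto simp: fs.subspace_def orth_compl_def lay_inner_add_left lay_inner_scale_left
      intro!: fs.subspace_add fs.subspace_scale subspace_funs_on fs.subspace_0)

lemma subspace_Vsp: "fs.subspace (Vsp n i j)"
  unfolding Vsp_def by (simp add: fs.subspace_inter subspace_Usp subspace_orth_compl)

lemma Vsp_funs_on: "Vsp n i j \<subseteq> funs_on (layer n i)"
  unfolding Vsp_def using Usp_funs_on by auto

lemma Vsp_Usp: "Vsp n i j \<subseteq> Usp n i j"
  by (auto simp: Vsp_def)

lemma Vsp_Suc_iff: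
  "f \<in> Vsp n i (Suc j) \<longleftrightarrow> f \<in> Usp n i (Suc j) \<and> (\<forall>g\<in>Usp n i j. lay_inner n i f g = 0)"
  using Usp_funs_on by (auto simp: Vsp_def orth_compl_def)

lemma Usp_Suc_decompose:
  assumes "g \<in> Usp n i (Suc j)"
  obtains a where "a \<in> Usp n i j" "g - a \<in> Vsp n i (Suc j)"
proof -
  obtain a where a: "a \<in> Usp n i j"
    and orth: "\<forall>h\<in>{gz n i z |z. z \<subseteq> {1..n} \<and> card z \<le> j}. lay_inner n i (g - a) h = 0"
    using orthogonal_projection_exists[OF finite_gz_generators gz_generators_funs_on]
    unfolding Usp_def by blast
  have "\<forall>h\<in>Usp n i j. lay_inner n i (g - a) h = 0"
    unfolding Usp_def using lay_inner_orthogonal_span[OF orth] by blast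
  moreover have "g - a \<in> Usp n i (Suc j)"
    using assms a Usp_mono[of j "Suc j" n i] by (auto intro: fs.subspace_diff[OF subspace_Usp])
  ultimately show ?thesis
    using that a Vsp_Suc_iff by blast
qed

lemma Usp_inter_Vsp_Suc: "f \<in> Usp n i j \<Longrightarrow> f \<in> Vsp n i (Suc j) \<Longrightarrow> f = 0"
  using lay_inner_self_eq_0_iff Vsp_funs_on Vsp_Suc_iff by blast

section \<open>The up and down operators\<close>

definition up_op :: "nat \<Rightarrow> nat \<Rightarrow> (nat set \<Rightarrow> real) \<Rightarrow> (nat set \<Rightarrow> real)" where
  "up_op n i f = (\<lambda>x. if x \<in> layer n (Suc i) then (\<Sum>y\<in>{y \<in> layer n i. y \<subseteq> x}. f y) else 0)"

definition down_op :: "nat \<Rightarrow> nat \<Rightarrow> (nat set \<Rightarrow> real) \<Rightarrow> (nat set \<Rightarrow> real)" where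
  "down_op n i g = (\<lambda>y. if y \<in> layer n i then (\<Sum>x\<in>{x \<in> layer n (Suc i). y \<subseteq> x}. g x) else 0)"

lemma up_op_funs_on: "up_op n i f \<in> funs_on (layer n (Suc i))"
  by (simp add: up_op_def funs_on_def)

lemma down_op_funs_on: "down_op n i f \<in> funs_on (layer n i)"
  by (simp add: down_op_def funs_on_def)

lemma up_op_linear: "module_hom fscale fscale (up_op n i)"
  unfolding module_hom_iff
  by (intro conjI fs.module_axioms allI)
    (simp_all add: up_op_def fun_eq_iff sum.distrib sum_distrib_left)

lemma down_op_linear: "module_hom fscale fscale (down_op n i)"
  unfolding module_hom_iff
  by (intro conjI fs.module_axioms allI)
    (simp_all add: down_op_def fun_eq_iff sum.distrib sum_distrib_left)

lemmas up_op_add = module_hom.add[OF up_op_linear]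
  and up_op_scale = module_hom.scale[OF up_op_linear]
  and up_op_zero = module_hom.zero[OF up_op_linear]
  and up_op_span_image = module_hom.span_image[OF up_op_linear, symmetric]
  and down_op_add = module_hom.add[OF down_op_linear]
  and down_op_scale = module_hom.scale[OF down_op_linear]
  and down_op_diff = module_hom.diff[OF down_op_linear]
  and down_op_span_image = module_hom.span_image[OF down_op_linear, symmetric]

lemma up_op_cong: "(\<And>y. y \<in> layer n i \<Longrightarrow> f y = g y) \<Longrightarrow> up_op n i f = up_op n i g"
  by (auto simp: up_op_def fun_eq_iff intro!: sum.cong)

lemma down_op_cong: "(\<And>x. x \<in> layer n (Suc i) \<Longrightarrow> f x = g x) \<Longrightarrow> down_op n i f = down_op n i g"
  by (auto simp: down_op_def fun_eq_iff intro!: sum.cong)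

lemma up_op_adjoint: "lay_inner n (Suc i) (up_op n i f) g = lay_inner n i f (down_op n i g)"
proof -
  have "lay_inner n (Suc i) (up_op n i f) g
      = (\<Sum>x\<in>layer n (Suc i). \<Sum>y\<in>layer n i. if y \<subseteq> x then f y * g x else 0)"
    unfolding lay_inner_def
  proof (rule sum.cong[OF refl])
    fix x assume "x \<in> layer n (Suc i)"
    then have "up_op n i f x * g x = (\<Sum>y\<in>{y \<in> layer n i. y \<subseteq> x}. f y * g x)"
      by (simp add: up_op_def sum_distrib_right)
    then show "up_op n i f x * g x = (\<Sum>y\<in>layer n i. if y \<subseteq> x then f y * g x else 0)"
      by (simp add: sum.inter_filter)
  qed
  also have "\<dots> = (\<Sum>y\<in>layer n i. \<Sum>x\<in>layer n (Suc i). if y \<subseteq> x then f y * g x else 0)"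
    by (rule sum.swap)
  also have "\<dots> = lay_inner n i f (down_op n i g)"
    unfolding lay_inner_def
  proof (rule sum.cong[OF refl])
    fix y assume "y \<in> layer n i"
    then have "f y * down_op n i g y = (\<Sum>x\<in>{x \<in> layer n (Suc i). y \<subseteq> x}. f y * g x)"
      by (simp add: down_op_def sum_distrib_left)
    then show "(\<Sum>x\<in>layer n (Suc i). if y \<subseteq> x then f y * g x else 0) = f y * down_op n i g y"
      by (simp add: sum.inter_filter)
  qed
  finally show ?thesis .
qed

lemma sum_nested_filter_eq_sum_card:
  fixes g :: "'b \<Rightarrow> real"
  assumes "finite A" "finite B"
  shows "(\<Sum>a\<in>{a \<in> A. P a}. \<Sum>b\<in>{b \<in> B. Q a b}. g b) = (\<Sum>b\<in>B. g b * real (card {a \<in> A. P a \<and> Q a b}))"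
proof -
  have "(\<Sum>a\<in>{a \<in> A. P a}. \<Sum>b\<in>{b \<in> B. Q a b}. g b)
      = (\<Sum>a\<in>A. if P a then (\<Sum>b\<in>{b \<in> B. Q a b}. g b) else 0)"
    using assms(1) by (rule sum.inter_filter)
  also have "\<dots> = (\<Sum>a\<in>A. \<Sum>b\<in>B. if P a \<and> Q a b then g b else 0)"
    using sum.inter_filter[OF assms(2)] by (intro sum.cong) auto
  also have "\<dots> = (\<Sum>b\<in>B. \<Sum>a\<in>A. if P a \<and> Q a b then g b else 0)"
    by (rule sum.swap)
  also have "\<dots> = (\<Sum>b\<in>B. g b * real (card {a \<in> A. P a \<and> Q a b}))"
    using sum.inter_filter[OF assms(1), of "\<lambda>_. g _", symmetric] by (intro sum.cong) auto
  finally show ?thesis .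
qed

lemma common_neighbour_count:
  assumes y: "y \<in> layer n (Suc k)" and w: "w \<in> layer n (Suc k)"
  shows "real (card {x \<in> layer n (Suc (Suc k)). y \<subseteq> x \<and> w \<subseteq> x})
      - real (card {v \<in> layer n k. v \<subseteq> y \<and> v \<subseteq> w})
    = (if w = y then real n - 2 * real (Suc k) else 0)"
proof (cases "w = y")
  case True
  then show ?thesis
    using card_supersets_in_next_layer[OF y] card_subsets_in_prev_layer[OF y] le_of_in_layer[OF y]
    by (simp add: of_nat_diff)
next
  case False
  have fin: "finite y" "finite w" and sub: "y \<union> w \<subseteq> {1..n}" "y \<inter> w \<subseteq> {1..n}"
    using y w finite_of_in_layer by (auto simp: layer_iff)
  have "y \<inter> w \<subset> y"
    using False subset_in_layer_eq[OF y w] by auto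
  then have inter: "card (y \<inter> w) \<le> k"
    using psubset_card_mono[OF fin(1)] y by (metis layer_iff less_Suc_eq_le)
  have "card (y \<union> w) + card (y \<inter> w) = 2 * Suc k"
    using card_Un_Int[OF fin] y w by (simp add: layer_iff)
  \<comment> \<open>y and w have a common upper neighbour iff they have a common lower neighbour.\<close>
  then have "card {x \<in> layer n (Suc (Suc k)). y \<union> w \<subseteq> x} = card {v \<in> layer n k. v \<subseteq> y \<inter> w}"
    using inter card_layer_supersets[OF sub(1), of "Suc (Suc k)"] card_layer_subsets[OF sub(2), of k]
    by simp
  then show ?thesis
    using False by simp
qed

lemma down_up_commute_apply:
  assumes y: "y \<in> layer n (Suc k)"
  shows "down_op n (Suc k) (up_op n (Suc k) f) y
    = up_op n k (down_op n k f) y + (real n - 2 * real (Suc k)) * f y"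
proof -
  have "down_op n (Suc k) (up_op n (Suc k) f) y
      = (\<Sum>x\<in>{x \<in> layer n (Suc (Suc k)). y \<subseteq> x}. \<Sum>w\<in>{w \<in> layer n (Suc k). w \<subseteq> x}. f w)"
    using y by (simp add: down_op_def up_op_def)
  also have "\<dots> = (\<Sum>w\<in>layer n (Suc k). f w * real (card {x \<in> layer n (Suc (Suc k)). y \<subseteq> x \<and> w \<subseteq> x}))"
    by (rule sum_nested_filter_eq_sum_card) auto
  finally have down_up: "down_op n (Suc k) (up_op n (Suc k) f) y = \<dots>" .
  have "up_op n k (down_op n k f) y
      = (\<Sum>v\<in>{v \<in> layer n k. v \<subseteq> y}. \<Sum>w\<in>{w \<in> layer n (Suc k). v \<subseteq> w}. f w)"
    using y by (simp add: down_op_def up_op_def)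
  also have "\<dots> = (\<Sum>w\<in>layer n (Suc k). f w * real (card {v \<in> layer n k. v \<subseteq> y \<and> v \<subseteq> w}))"
    by (rule sum_nested_filter_eq_sum_card) auto
  finally have up_down: "up_op n k (down_op n k f) y = \<dots>" .
  have "down_op n (Suc k) (up_op n (Suc k) f) y - up_op n k (down_op n k f) y
     = (\<Sum>w\<in>layer n (Suc k). f w * (real (card {x \<in> layer n (Suc (Suc k)). y \<subseteq> x \<and> w \<subseteq> x})
          - real (card {v \<in> layer n k. v \<subseteq> y \<and> v \<subseteq> w})))"
    unfolding down_up up_down by (simp add: sum_subtractf algebra_simps)
  also have "\<dots> = (\<Sum>w\<in>layer n (Suc k). if w = y then f y * (real n - 2 * real (Suc k)) else 0)"
    by (intro sum.cong) (simp_all add: common_neighbour_count[OF y])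
  also have "\<dots> = f y * (real n - 2 * real (Suc k))"
    using y by simp
  finally show ?thesis by (simp add: algebra_simps)
qed

lemma down_up_layer_0_apply:
  assumes y: "y \<in> layer n 0"
  shows "down_op n 0 (up_op n 0 f) y = real n * f y"
proof -
  have "{v \<in> layer n 0. v \<subseteq> x} = {{}}" for x
    by (auto simp: layer_0)
  then have "down_op n 0 (up_op n 0 f) y = (\<Sum>x\<in>{x \<in> layer n (Suc 0). {} \<subseteq> x}. f {})"
    using y by (simp add: down_op_def up_op_def layer_0)
  then show ?thesis
    using y card_supersets_in_next_layer[of "{}" n 0] by (simp add: layer_0)
qed

lemma down_up_commute:
  assumes "f \<in> funs_on (layer n (Suc k))"
  shows "down_op n (Suc k) (up_op n (Suc k) f)
    = up_op n k (down_op n k f) + fscale (real n - 2 * real (Suc k)) f"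
proof (rule funs_on_eqI[OF down_op_funs_on])
  show "up_op n k (down_op n k f) + fscale (real n - 2 * real (Suc k)) f \<in> funs_on (layer n (Suc k))"
    using assms up_op_funs_on[of n k] by (simp add: funs_on_def)
qed (simp add: down_up_commute_apply)

lemma down_up_layer_0:
  assumes "f \<in> funs_on (layer n 0)"
  shows "down_op n 0 (up_op n 0 f) = fscale (real n) f"
proof (rule funs_on_eqI[OF down_op_funs_on])
  show "fscale (real n) f \<in> funs_on (layer n 0)"
    using assms by (simp add: funs_on_def)
qed (simp add: down_up_layer_0_apply)

lemma sum_indicator_eq_card:
  assumes "finite S"
  shows "(\<Sum>y\<in>S. if P y then (1::real) else 0) = real (card {y \<in> S. P y})"
  using sum.inter_filter[OF assms, of "\<lambda>_. (1::real)" P, symmetric] by simp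

lemma up_op_gz:
  assumes z: "z \<subseteq> {1..n}" and card_z: "card z \<le> Suc i"
  shows "up_op n i (gz n i z) = fscale (real (Suc i) - real (card z)) (gz n (Suc i) z)"
proof (rule funs_on_eqI[OF up_op_funs_on])
  show "fscale (real (Suc i) - real (card z)) (gz n (Suc i) z) \<in> funs_on (layer n (Suc i))"
    using gz_funs_on by (simp add: funs_on_def)
  fix x assume x: "x \<in> layer n (Suc i)"
  have "up_op n i (gz n i z) x = (\<Sum>y\<in>{y \<in> layer n i. y \<subseteq> x}. if z \<subseteq> y then 1 else 0)"
    using x by (auto simp: up_op_def gz_def intro!: sum.cong)
  also have "\<dots> = real (card {y \<in> layer n i. y \<subseteq> x \<and> z \<subseteq> y})"
    by (subst sum_indicator_eq_card) (simp_all add: conj_assoc)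
  also have "\<dots> = real (card {a \<in> x. z \<subseteq> x - {a}})"
    unfolding subsets_in_prev_layer[OF x] by (subst card_image) (auto simp: inj_on_def)
  also have "\<dots> = (if z \<subseteq> x then real (Suc i) - real (card z) else 0)"
  proof (cases "z \<subseteq> x")
    case True
    then have "{a \<in> x. z \<subseteq> x - {a}} = x - z" by auto
    then show ?thesis
      using True x card_z finite_subset[OF z] by (simp add: card_Diff_subset layer_iff of_nat_diff)
  next
    case False
    then have "{a \<in> x. z \<subseteq> x - {a}} = {}" by auto
    with False show ?thesis by (simp only: card.empty) simp
  qed
  finally show "up_op n i (gz n i z) x = fscale (real (Suc i) - real (card z)) (gz n (Suc i) z) x"
    using x by (simp add: gz_def)
qed

lemma down_op_gz:
  assumes z: "z \<subseteq> {1..n}"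
  shows "down_op n i (gz n (Suc i) z)
    = fscale (real n - real i - real (card z)) (gz n i z) + (\<Sum>b\<in>z. gz n i (z - {b}))"
proof (rule funs_on_eqI[OF down_op_funs_on])
  have fz: "finite z" using z finite_subset by blast
  show "fscale (real n - real i - real (card z)) (gz n i z) + (\<Sum>b\<in>z. gz n i (z - {b}))
      \<in> funs_on (layer n i)"
    by (simp add: funs_on_def gz_def sum_fun_apply)
  fix y assume y: "y \<in> layer n i"
  have "down_op n i (gz n (Suc i) z) y = (\<Sum>x\<in>{x \<in> layer n (Suc i). y \<subseteq> x}. if z \<subseteq> x then 1 else 0)"
    using y by (auto simp: down_op_def gz_def intro!: sum.cong)
  also have "\<dots> = real (card {x \<in> layer n (Suc i). y \<subseteq> x \<and> z \<subseteq> x})"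
    by (subst sum_indicator_eq_card) (simp_all add: conj_assoc)
  also have "\<dots> = real (card {a \<in> {1..n} - y. z \<subseteq> insert a y})"
    unfolding supersets_in_next_layer[OF y] by (subst card_image) (auto simp: inj_on_def)
  finally have lhs: "down_op n i (gz n (Suc i) z) y = real (card {a \<in> {1..n} - y. z \<subseteq> insert a y})" .
  have rhs: "(\<Sum>b\<in>z. gz n i (z - {b})) y = real (card {b \<in> z. z - {b} \<subseteq> y})"
    using y sum_indicator_eq_card[OF fz, of "\<lambda>b. z - {b} \<subseteq> y"] by (simp add: sum_fun_apply gz_def)
  show "down_op n i (gz n (Suc i) z) y
      = (fscale (real n - real i - real (card z)) (gz n i z) + (\<Sum>b\<in>z. gz n i (z - {b}))) y"
  proof (cases "z \<subseteq> y")
    case True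
    then have "{a \<in> {1..n} - y. z \<subseteq> insert a y} = {1..n} - y" "{b \<in> z. z - {b} \<subseteq> y} = z"
      by auto
    moreover have "card ({1..n} - y) = n - i"
      using y finite_of_in_layer[OF y] by (simp add: layer_iff card_Diff_subset)
    ultimately show ?thesis
      using lhs rhs True y le_of_in_layer[OF y] by (simp add: gz_def of_nat_diff)
  next
    case False
    then have "{a \<in> {1..n} - y. z \<subseteq> insert a y} = {b \<in> z. z - {b} \<subseteq> y}"
      using z by auto
    then show ?thesis
      using lhs rhs False y by (simp add: gz_def)
  qed
qed

lemma up_op_Usp: "j \<le> Suc i \<Longrightarrow> up_op n i ` Usp n i j \<subseteq> Usp n (Suc i) j"
  unfolding Usp_def up_op_span_image
proof (rule fs.span_minimal[OF _ fs.subspace_span], safe)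
  fix z assume z: "j \<le> Suc i" "z \<subseteq> {1..n}" "card z \<le> j"
  have "gz n (Suc i) z \<in> fs.span {gz n (Suc i) z |z. z \<subseteq> {1..n} \<and> card z \<le> j}"
    using z by (auto intro: fs.span_base)
  then show "up_op n i (gz n i z) \<in> fs.span {gz n (Suc i) z |z. z \<subseteq> {1..n} \<and> card z \<le> j}"
    using z by (simp add: up_op_gz fs.span_scale)
qed

lemma up_op_Usp_eq: "j \<le> i \<Longrightarrow> up_op n i ` Usp n i j = Usp n (Suc i) j"
proof
  assume j: "j \<le> i"
  then show "up_op n i ` Usp n i j \<subseteq> Usp n (Suc i) j"
    by (simp add: up_op_Usp)
  show "Usp n (Suc i) j \<subseteq> up_op n i ` Usp n i j"
    unfolding Usp_def up_op_span_image
  proof (rule fs.span_minimal[OF _ fs.subspace_span], safe)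
    fix z assume z: "z \<subseteq> {1..n}" "card z \<le> j"
    define c where "c = real (Suc i) - real (card z)"
    have "c \<noteq> 0" using z j by (simp add: c_def)
    then have "gz n (Suc i) z = fscale (1 / c) (up_op n i (gz n i z))"
      using z j by (simp add: up_op_gz c_def fun_eq_iff)
    moreover have "up_op n i (gz n i z) \<in> fs.span (up_op n i ` {gz n i z |z. z \<subseteq> {1..n} \<and> card z \<le> j})"
      using z by (auto intro: fs.span_base)
    ultimately show "gz n (Suc i) z \<in> fs.span (up_op n i ` {gz n i z |z. z \<subseteq> {1..n} \<and> card z \<le> j})"
      by (simp add: fs.span_scale)
  qed
qed

lemma down_op_Usp: "down_op n i ` Usp n (Suc i) j \<subseteq> Usp n i j"
  unfolding Usp_def down_op_span_image
proof (rule fs.span_minimal[OF _ fs.subspace_span], safe)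
  fix z assume z: "z \<subseteq> {1..n}" "card z \<le> j"
  let ?S = "fs.span {gz n i z |z. z \<subseteq> {1..n} \<and> card z \<le> j}"
  have "gz n i (z - {b}) \<in> ?S" for b
    using z le_trans[OF card_Diff1_le[of z b]] by (auto intro!: fs.span_base)
  moreover have "gz n i z \<in> ?S"
    using z by (auto intro!: fs.span_base)
  ultimately show "down_op n i (gz n (Suc i) z) \<in> ?S"
    unfolding down_op_gz[OF z(1)] by (intro fs.span_add fs.span_scale fs.span_sum)
qed

section \<open>Dimensions\<close>

context vector_space
begin

lemma independent_Un:
  assumes "independent B1" "independent B2" "finite B2"
    and "\<And>x. x \<in> span B1 \<Longrightarrow> x \<in> span B2 \<Longrightarrow> x = 0"
  shows "independent (B1 \<union> B2)"
  using assms(3,2,4)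
proof (induction B2 rule: finite_induct)
  case empty
  then show ?case using assms(1) by simp
next
  case (insert b B)
  have B: "independent B" and b: "b \<notin> span B"
    using insert.prems(1) insert.hyps(2) by (auto simp: independent_insert)
  have span_B: "span B \<subseteq> span (insert b B)"
    by (rule span_mono) auto
  have "b \<notin> span (B1 \<union> B)"
  proof
    assume "b \<in> span (B1 \<union> B)"
    then obtain x y where xy: "b = x + y" "x \<in> span B1" "y \<in> span B"
      unfolding span_Un by blast
    then have "x \<in> span (insert b B)"
      using span_B span_diff[of b "insert b B" y] by (auto intro: span_base)
    then have "x = 0"
      using insert.prems(2) xy(2) by blast
    with xy b show False by simp
  qed
  moreover have "independent (B1 \<union> B)"
    using insert.IH[OF B] insert.prems(2) span_B by blast
  ultimately show ?case
    using independent_insertI[of b "B1 \<union> B"] by simp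
qed

lemma dim_eq_dim_add_dim:
  assumes V: "subspace V" "V \<subseteq> U" and W: "subspace W" "W \<subseteq> U"
    and U: "finite F" "U \<subseteq> span F"
    and decompose: "\<And>u. u \<in> U \<Longrightarrow> \<exists>v\<in>V. u - v \<in> W"
    and trivial_Int: "\<And>x. x \<in> V \<Longrightarrow> x \<in> W \<Longrightarrow> x = 0"
  shows "dim U = dim V + dim W"
proof -
  obtain B1 where B1: "B1 \<subseteq> V" "independent B1" "V \<subseteq> span B1" "card B1 = dim V"
    using basis_exists by blast
  obtain B2 where B2: "B2 \<subseteq> W" "independent B2" "W \<subseteq> span B2" "card B2 = dim W"
    using basis_exists by blast
  have fin: "finite B1" "finite B2"
    using independent_span_bound[OF U(1)] B1 B2 V W U by (meson order_trans)+
  have span_B1: "span B1 = V" and span_B2: "span B2 = W"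
    using span_subspace B1 B2 V W by auto
  have indep: "independent (B1 \<union> B2)"
    using independent_Un[OF B1(2) B2(2) fin(2)] trivial_Int span_B1 span_B2 by blast
  have "U \<subseteq> span (B1 \<union> B2)"
  proof
    fix u assume "u \<in> U"
    then obtain v where "v \<in> V" "u - v \<in> W" using decompose by blast
    then have "v + (u - v) \<in> span (B1 \<union> B2)"
      using span_B1 span_B2 span_mono[of B1 "B1 \<union> B2"] span_mono[of B2 "B1 \<union> B2"]
      by (intro span_add) auto
    then show "u \<in> span (B1 \<union> B2)" by simp
  qed
  moreover have "B1 \<union> B2 \<subseteq> U"
    using B1(1) B2(1) V(2) W(2) by blast
  ultimately have "card (B1 \<union> B2) = dim U"
    using basis_card_eq_dim[OF _ _ indep] by blast
  moreover have "B1 \<inter> B2 = {}"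
  proof -
    have "0 \<notin> B1"
      using B1(2) dependent_zero by blast
    moreover have "x = 0" if "x \<in> B1" "x \<in> B2" for x
      using that trivial_Int B1(1) B2(1) by blast
    ultimately show ?thesis by blast
  qed
  ultimately show ?thesis
    using card_Un_disjoint[OF fin] B1(4) B2(4) by simp
qed

lemma dim_image_eq_of_inj_on:
  assumes h: "module_hom scale scale h" and V: "subspace V" and inj: "inj_on h V"
  shows "dim (h ` V) = dim V"
proof -
  obtain B where B: "B \<subseteq> V" "independent B" "V \<subseteq> span B" "card B = dim V"
    using basis_exists by blast
  have span_B: "span B = V"
    using span_subspace B V by auto
  have "independent (h ` B)"
    using module_hom.independent_injective_image[OF h B(2)] inj span_B by simp
  moreover have "h ` V \<subseteq> span (h ` B)"
    using module_hom.span_image[OF h, of B] span_B by simp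
  ultimately have "card (h ` B) = dim (h ` V)"
    using basis_card_eq_dim[OF image_mono[OF B(1)]] by blast
  moreover have "card (h ` B) = card B"
    using card_image[OF inj_on_subset[OF inj B(1)]] .
  ultimately show ?thesis
    using B(4) by simp
qed

end

lemma up_op_eq_0_imp_eq_0:
  assumes m: "2 * m < n" and f: "f \<in> funs_on (layer n m)" and up: "up_op n m f = 0"
  shows "f = 0"
proof -
  have norm_up: "lay_inner n m f (down_op n m (up_op n m f)) = 0"
    using up_op_adjoint[of n m f "up_op n m f"] up by simp
  \<comment> \<open>By the commutation relation this is a sum of squares with a positive weight on f itself.\<close>
  have "lay_inner n m f f = 0"
  proof (cases m)
    case 0
    then have "lay_inner n m f (down_op n m (up_op n m f)) = real n * lay_inner n m f f"
      using down_up_layer_0 f by (simp add: lay_inner_scale_right)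
    with norm_up show ?thesis
      using m 0 by simp
  next
    case (Suc k)
    have "lay_inner n m f (down_op n m (up_op n m f))
        = lay_inner n m f (up_op n k (down_op n k f) + fscale (real n - 2 * real (Suc k)) f)"
      using Suc down_up_commute f by simp
    also have "\<dots> = lay_inner n k (down_op n k f) (down_op n k f)
        + (real n - 2 * real (Suc k)) * lay_inner n m f f"
      using Suc up_op_adjoint[of n k "down_op n k f" f]
      by (simp add: lay_inner_add_right lay_inner_scale_right lay_inner_sym)
    finally have "lay_inner n k (down_op n k f) (down_op n k f)
        + (real n - 2 * real (Suc k)) * lay_inner n m f f = 0"
      using norm_up by simp
    moreover have "real n - 2 * real (Suc k) > 0"
      using m Suc by simp
    ultimately show ?thesis
      using lay_inner_self_nonneg[of n k "down_op n k f"] lay_inner_self_nonneg[of n m f]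
      by (smt (verit) mult_pos_pos)
  qed
  then show ?thesis
    using lay_inner_self_eq_0_iff[OF f] by simp
qed

lemma up_op_inj_on: "2 * m < n \<Longrightarrow> inj_on (up_op n m) (funs_on (layer n m))"
  using module_hom.inj_on_iff_eq_0[OF up_op_linear subspace_funs_on] up_op_eq_0_imp_eq_0 by blast

lemma dim_Usp:
  assumes "j \<le> i" "2 * i \<le> n + 1"
  shows "fdim (Usp n i j) = n choose j"
  using assms
proof (induction i rule: dec_induct)
  case base
  then show ?case
    using Usp_full[of j j n] dim_funs_on_layer[of n j] by (simp del: fscale_apply)
next
  case (step k)
  then have "fdim (up_op n k ` Usp n k j) = fdim (Usp n k j)"
    by (intro fs.dim_image_eq_of_inj_on up_op_linear subspace_Usp
        inj_on_subset[OF up_op_inj_on Usp_funs_on]) simp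
  then show ?case
    using up_op_Usp_eq[OF step.hyps(1)] step by (simp del: fscale_apply)
qed

lemma dim_Vsp:
  assumes "t \<le> i" "2 * i \<le> n + 1"
  shows "int (fdim (Vsp n i t)) = int (n choose t) - (if t = 0 then 0 else int (n choose (t - 1)))"
proof (cases t)
  case 0
  then show ?thesis
    using dim_Usp[of 0 i n] assms by (simp add: Vsp_def)
next
  case (Suc s)
  have "fdim (Usp n i (Suc s)) = fdim (Usp n i s) + fdim (Vsp n i (Suc s))"
  proof (rule fs.dim_eq_dim_add_dim[OF subspace_Usp _ subspace_Vsp Vsp_Usp finite_gz_generators])
    show "Usp n i s \<subseteq> Usp n i (Suc s)"
      by (rule Usp_mono) simp
    show "Usp n i (Suc s) \<subseteq> fs.span {gz n i z |z. z \<subseteq> {1..n} \<and> card z \<le> Suc s}"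
      by (simp add: Usp_def)
    show "\<exists>v\<in>Usp n i s. u - v \<in> Vsp n i (Suc s)" if "u \<in> Usp n i (Suc s)" for u
      using Usp_Suc_decompose[OF that] by metis
    show "x = 0" if "x \<in> Usp n i s" "x \<in> Vsp n i (Suc s)" for x
      using Usp_inter_Vsp_Suc that by blast
  qed
  then show ?thesis
    using dim_Usp[of "Suc s" i n] dim_Usp[of s i n] assms Suc by (simp del: fscale_apply)
qed

lemma down_op_eq_0_iff_orthogonal:
  assumes "f \<in> funs_on (layer n (Suc i))"
  shows "down_op n i f = 0 \<longleftrightarrow> (\<forall>g\<in>Usp n (Suc i) i. lay_inner n (Suc i) f g = 0)"
proof
  assume "down_op n i f = 0"
  then show "\<forall>g\<in>Usp n (Suc i) i. lay_inner n (Suc i) f g = 0"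
    using up_op_Usp_eq[of i i n] up_op_adjoint lay_inner_sym by (metis imageE lay_inner_zero_right order_refl)
next
  assume orth: "\<forall>g\<in>Usp n (Suc i) i. lay_inner n (Suc i) f g = 0"
  have "down_op n i f \<in> Usp n i i"
    using Usp_full[of i i n] down_op_funs_on by blast
  then have "up_op n i (down_op n i f) \<in> Usp n (Suc i) i"
    using up_op_Usp[of i i n] by auto
  then have "lay_inner n (Suc i) f (up_op n i (down_op n i f)) = 0"
    using orth by blast
  then have "lay_inner n i (down_op n i f) (down_op n i f) = 0"
    by (metis lay_inner_sym up_op_adjoint)
  then show "down_op n i f = 0"
    using lay_inner_self_eq_0_iff[OF down_op_funs_on] by blast
qed

lemma up_op_Vsp:
  assumes t: "t \<le> i" and f: "f \<in> Vsp n i t"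
  shows "up_op n i f \<in> Vsp n (Suc i) t"
proof (cases t)
  case 0
  then show ?thesis using f up_op_Usp[of 0 i n] by (auto simp: Vsp_def)
next
  case (Suc s)
  have "f \<in> Usp n i t"
    using f Vsp_Usp by blast
  then have "up_op n i f \<in> Usp n (Suc i) t"
    using up_op_Usp[of t i n] t by auto
  moreover have "lay_inner n (Suc i) (up_op n i f) g = 0" if "g \<in> Usp n (Suc i) s" for g
  proof -
    have "down_op n i g \<in> Usp n i s"
      using down_op_Usp that by blast
    then show ?thesis
      using f Suc by (simp add: up_op_adjoint Vsp_Suc_iff)
  qed
  ultimately show ?thesis
    using Suc by (simp add: Vsp_Suc_iff)
qed

lemma down_op_Vsp:
  assumes t: "t \<le> i" and f: "f \<in> Vsp n (Suc i) t"
  shows "down_op n i f \<in> Vsp n i t"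
proof (cases t)
  case 0
  then show ?thesis using f down_op_Usp[of n i 0] by (auto simp: Vsp_def)
next
  case (Suc s)
  have "down_op n i f \<in> Usp n i t"
    using down_op_Usp f Vsp_Usp by blast
  moreover have "lay_inner n i (down_op n i f) g = 0" if "g \<in> Usp n i s" for g
  proof -
    have "up_op n i g \<in> Usp n (Suc i) s"
      using up_op_Usp[of s i n] Suc t that by auto
    then have "lay_inner n (Suc i) f (up_op n i g) = 0"
      using f Suc by (simp add: Vsp_Suc_iff)
    then show ?thesis
      by (metis lay_inner_sym up_op_adjoint)
  qed
  ultimately show ?thesis
    using Suc by (simp add: Vsp_Suc_iff)
qed

section \<open>The spectrum of down after up\<close>

definition du_eigenvalue :: "nat \<Rightarrow> nat \<Rightarrow> nat \<Rightarrow> real" where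
  "du_eigenvalue n i t = (real i + 1 - real t) * (real n - real i - real t)"

lemma up_down_Vsp_Suc:
  assumes t: "t \<le> i" and f: "f \<in> Vsp n (Suc i) t"
    and eigen: "down_op n i (up_op n i (down_op n i f)) = fscale c (down_op n i f)"
  shows "up_op n i (down_op n i f) = fscale c f"
proof -
  define h where "h = up_op n i (down_op n i f) - fscale c f"
  have "down_op n i f \<in> Usp n i t"
    using down_op_Vsp[OF t f] Vsp_Usp by blast
  then have "up_op n i (down_op n i f) \<in> Usp n (Suc i) t"
    using up_op_Usp[of t i n] t by auto
  moreover have "fscale c f \<in> Usp n (Suc i) t"
    using f Vsp_Usp fs.subspace_scale[OF subspace_Usp] by blast
  ultimately have "h \<in> Usp n (Suc i) t"
    unfolding h_def by (rule fs.subspace_diff[OF subspace_Usp])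
  then obtain q where q: "h = up_op n i q"
    using up_op_Usp_eq[OF t, of n] by blast
  \<comment> \<open>h lies in the image of up_op and in the kernel of its adjoint down_op, so h = 0.\<close>
  have "down_op n i h = 0"
    using eigen by (simp add: h_def down_op_diff down_op_scale)
  then have "lay_inner n (Suc i) h h = 0"
    using up_op_adjoint[of n i q h] q by simp
  then have "h = 0"
    using lay_inner_self_eq_0_iff q up_op_funs_on by blast
  then show ?thesis
    by (simp add: h_def)
qed

lemma down_up_Vsp:
  assumes "t \<le> i" "f \<in> Vsp n i t"
  shows "down_op n i (up_op n i f) = fscale (du_eigenvalue n i t) f"
  using assms
proof (induction i arbitrary: f rule: dec_induct)
  case base
  then have f: "f \<in> funs_on (layer n t)"
    using Vsp_funs_on by blast
  show ?case
  proof (cases t)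
    case 0
    then show ?thesis
      using down_up_layer_0 f by (simp add: du_eigenvalue_def)
  next
    case (Suc s)
    then have "down_op n s f = 0"
      using base f down_op_eq_0_iff_orthogonal Vsp_Suc_iff by blast
    then have "down_op n t (up_op n t f) = fscale (real n - 2 * real t) f"
      using down_up_commute[of f n s] f Suc by (simp add: up_op_zero)
    moreover have "du_eigenvalue n t t = real n - 2 * real t"
      by (simp add: du_eigenvalue_def)
    ultimately show ?thesis
      by simp
  qed
next
  case (step i)
  have f: "f \<in> funs_on (layer n (Suc i))"
    using step.prems Vsp_funs_on by blast
  have "up_op n i (down_op n i f) = fscale (du_eigenvalue n i t) f"
    using step.IH[OF down_op_Vsp[OF step.hyps(1) step.prems]] step
    by (intro up_down_Vsp_Suc) auto
  then have "down_op n (Suc i) (up_op n (Suc i) f)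
      = fscale (du_eigenvalue n i t + (real n - 2 * real (Suc i))) f"
    using down_up_commute[OF f] by (simp add: fs.scale_left_distrib)
  moreover have "du_eigenvalue n i t + (real n - 2 * real (Suc i)) = du_eigenvalue n (Suc i) t"
    by (simp add: du_eigenvalue_def algebra_simps)
  ultimately show ?case
    by simp
qed

lemma du_eigenvalue_pos: "t \<le> i \<Longrightarrow> 2 * Suc i \<le> n \<Longrightarrow> du_eigenvalue n i t > 0"
  unfolding du_eigenvalue_def by (intro mult_pos_pos) auto

lemma du_eigenvalue_eq:
  "t \<le> i \<Longrightarrow> 2 * Suc i \<le> n \<Longrightarrow> du_eigenvalue n i t = real (Suc i - t) * real (n - Suc i - t + 1)"
  by (simp add: du_eigenvalue_def of_nat_diff algebra_simps)

lemma inj_on_du_eigenvalue: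
  assumes "2 * Suc i \<le> n"
  shows "inj_on (du_eigenvalue n i) {..i}"
proof (rule linorder_inj_onI')
  fix s t assume "s \<in> {..i}" "t \<in> {..i}" "s < t"
  then have "du_eigenvalue n i t < du_eigenvalue n i s"
    using assms unfolding du_eigenvalue_def by (intro mult_strict_mono) auto
  then show "du_eigenvalue n i s \<noteq> du_eigenvalue n i t"
    by simp
qed

lemma Vsp_if_down_up_eigenvector:
  assumes inj: "inj_on (du_eigenvalue n i) {..i}" and t: "t \<le> i"
  shows "j \<le> i \<Longrightarrow> g \<in> Usp n i j
    \<Longrightarrow> down_op n i (up_op n i g) = fscale (du_eigenvalue n i t) g \<Longrightarrow> g \<in> Vsp n i t"
proof (induction j arbitrary: g)
  case 0
  then have g: "g \<in> Vsp n i 0"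
    by (simp add: Vsp_def)
  show ?case
  proof (cases "t = 0")
    case False
    have "fscale (du_eigenvalue n i 0) g = fscale (du_eigenvalue n i t) g"
      using down_up_Vsp[OF le0 g] "0.prems"(3) by metis
    moreover have "du_eigenvalue n i 0 \<noteq> du_eigenvalue n i t"
      using inj t False by (auto dest: inj_onD)
    ultimately have "g = 0"
      by (metis fs.scale_cancel_right)
    then show ?thesis
      using fs.subspace_0[OF subspace_Vsp] by metis
  qed (use g in simp)
next
  case (Suc j)
  let ?c = "du_eigenvalue n i"
  obtain a where a: "a \<in> Usp n i j" and b: "g - a \<in> Vsp n i (Suc j)"
    using Usp_Suc_decompose[OF Suc.prems(2)] by blast
  define b where "b = g - a"
  have DU_b: "down_op n i (up_op n i b) = fscale (?c (Suc j)) b"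
    using down_up_Vsp[OF Suc.prems(1)] b by (simp add: b_def)
  have "down_op n i (up_op n i a) \<in> Usp n i j"
    using a up_op_Usp[of j i n] down_op_Usp[of n i j] Suc.prems(1) by auto
  then have x_U: "down_op n i (up_op n i a) - fscale (?c t) a \<in> Usp n i j"
    using a by (simp add: fs.subspace_diff fs.subspace_scale subspace_Usp)
  \<comment> \<open>Comparing the Usp n i j and Vsp n i (Suc j) components of down_op (up_op g) = c_t g.\<close>
  have "g = a + b"
    by (simp add: b_def)
  then have "fscale (?c t) a + fscale (?c t) b = down_op n i (up_op n i g)"
    using Suc.prems(3) fs.scale_right_distrib by metis
  also have "\<dots> = down_op n i (up_op n i a) + fscale (?c (Suc j)) b"
    unfolding \<open>g = a + b\<close> up_op_add down_op_add DU_b ..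
  finally have x_eq: "down_op n i (up_op n i a) - fscale (?c t) a = fscale (?c t - ?c (Suc j)) b"
    by (simp del: fscale_apply add: fs.scale_left_diff_distrib algebra_simps)
  moreover have "fscale (?c t - ?c (Suc j)) b \<in> Vsp n i (Suc j)"
    using b fs.subspace_scale[OF subspace_Vsp] by (simp add: b_def)
  ultimately have x_0: "down_op n i (up_op n i a) - fscale (?c t) a = 0"
    using Usp_inter_Vsp_Suc x_U by metis
  then have "a \<in> Vsp n i t"
    using Suc.IH[OF _ a] Suc.prems(1) by simp
  show ?case
  proof (cases "t = Suc j")
    case True
    then have "a = 0"
      using Usp_inter_Vsp_Suc[OF a] \<open>a \<in> Vsp n i t\<close> by simp
    then show ?thesis
      using True b by simp
  next
    case False
    then have "?c t \<noteq> ?c (Suc j)"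
      using inj t Suc.prems(1) by (auto dest: inj_onD)
    then have "b = 0"
      using x_eq x_0 by (simp del: fscale_apply)
    then show ?thesis
      using \<open>a \<in> Vsp n i t\<close> by (simp add: b_def)
  qed
qed

section \<open>The graph on two consecutive layers\<close>

lemma card_Diff_add_card:
  assumes "finite x" "finite y"
  shows "card (x - y) + card y = card (y - x) + card x"
  using assms by (metis Un_Diff_cancel Un_Diff_cancel2 Diff_disjoint card_Un_disjoint finite_Diff
      Int_commute add.commute)

lemma card_sym_diff:
  assumes "finite x" "finite y"
  shows "card ((x - y) \<union> (y - x)) = card (x - y) + card (y - x)"
  using assms by (intro card_Un_disjoint) auto

lemma cube_adj_sym: "cube_adj x y \<longleftrightarrow> cube_adj y x"
  by (simp add: cube_adj_def Un_commute)

lemma cube_adj_next_layer_iff: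
  assumes x: "x \<in> layer n (Suc i)" and y: "y \<in> layer n i"
  shows "cube_adj x y \<longleftrightarrow> y \<subseteq> x"
proof -
  have fin: "finite x" "finite y"
    using x y finite_of_in_layer by auto
  then have "card (x - y) = Suc (card (y - x))"
    using card_Diff_add_card[OF fin] x y by (simp add: layer_iff)
  then show ?thesis
    using card_sym_diff[OF fin] fin(2) by (auto simp: cube_adj_def)
qed

lemma not_cube_adj_same_layer:
  assumes x: "x \<in> layer n i" and y: "y \<in> layer n i"
  shows "\<not> cube_adj x y"
proof -
  have fin: "finite x" "finite y"
    using x y finite_of_in_layer by auto
  then have "card (x - y) = card (y - x)"
    using card_Diff_add_card[OF fin] x y by (simp add: layer_iff)
  then show ?thesis
    using card_sym_diff[OF fin] unfolding cube_adj_def by presburger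
qed

lemma adj_op_two_layers:
  "adj_op (layer n i \<union> layer n (Suc i)) f = up_op n i f + down_op n i f"
proof
  fix x
  let ?X = "layer n i \<union> layer n (Suc i)"
  have "{y \<in> ?X. cube_adj x y} = {y \<in> layer n i. y \<subseteq> x}" if "x \<in> layer n (Suc i)"
    using that cube_adj_next_layer_iff not_cube_adj_same_layer by blast
  moreover have "{y \<in> ?X. cube_adj x y} = {y \<in> layer n (Suc i). x \<subseteq> y}" if "x \<in> layer n i"
    using that cube_adj_next_layer_iff not_cube_adj_same_layer cube_adj_sym by blast
  ultimately show "adj_op ?X f x = (up_op n i f + down_op n i f) x"
    using layer_disjoint[of i "Suc i" x n] by (auto simp: adj_op_def up_op_def down_op_def)
qed

lemma add_eq_add_funs_on_disjoint_iff:
  assumes "u \<in> funs_on A" "u' \<in> funs_on A" "v \<in> funs_on B" "v' \<in> funs_on B" "A \<inter> B = {}"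
  shows "u + v = u' + v' \<longleftrightarrow> u = u' \<and> v = v'"
proof
  assume eq: "u + v = u' + v'"
  have "u x = u' x \<and> v x = v' x" for x
    using fun_cong[OF eq, of x] assms by (cases "x \<in> A") (auto simp: funs_on_def disjoint_iff)
  then show "u = u' \<and> v = v'"
    by auto
qed simp

lemma funs_on_Un_eq_restr_add:
  assumes "f \<in> funs_on (A \<union> B)" "A \<inter> B = {}"
  shows "f = restr f A + restr f B"
  using assms by (auto simp: restr_def funs_on_def fun_eq_iff)

lemma adj_op_eigen_iff:
  assumes f: "f \<in> funs_on (layer n i \<union> layer n (Suc i))"
  defines "P \<equiv> restr f (layer n i)" and "Q \<equiv> restr f (layer n (Suc i))"
  shows "adj_op (layer n i \<union> layer n (Suc i)) f = fscale lam f \<longleftrightarrow>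
    up_op n i P = fscale lam Q \<and> down_op n i Q = fscale lam P"
proof -
  have disj: "layer n (Suc i) \<inter> layer n i = {}" "layer n i \<inter> layer n (Suc i) = {}"
    by (auto simp: layer_def)
  have "up_op n i f = up_op n i P"
    by (rule up_op_cong) (simp add: P_def restr_def)
  moreover have "down_op n i f = down_op n i Q"
    by (rule down_op_cong) (simp add: Q_def restr_def)
  ultimately have "adj_op (layer n i \<union> layer n (Suc i)) f = up_op n i P + down_op n i Q"
    by (simp only: adj_op_two_layers)
  moreover have "f = P + Q"
    unfolding P_def Q_def using f disj(2) by (rule funs_on_Un_eq_restr_add)
  then have "fscale lam f = fscale lam Q + fscale lam P"
    by (simp only: fs.scale_right_distrib add.commute)
  moreover have "fscale lam P \<in> funs_on (layer n i)" "fscale lam Q \<in> funs_on (layer n (Suc i))"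
    unfolding P_def Q_def using restr_funs_on fs.subspace_scale[OF subspace_funs_on] by blast+
  ultimately show ?thesis
    using add_eq_add_funs_on_disjoint_iff[OF up_op_funs_on _ down_op_funs_on _ disj(1)] by simp
qed

definition eigen_lift :: "nat \<Rightarrow> nat \<Rightarrow> real \<Rightarrow> (nat set \<Rightarrow> real) \<Rightarrow> (nat set \<Rightarrow> real)" where
  "eigen_lift n i lam P = P + fscale (1 / lam) (up_op n i P)"

lemma eigen_lift_linear: "module_hom fscale fscale (eigen_lift n i lam)"
  unfolding module_hom_iff
  by (intro conjI fs.module_axioms allI)
    (simp_all add: eigen_lift_def fun_eq_iff up_op_add up_op_scale algebra_simps)

lemma eigen_lift_funs_on:
  "P \<in> funs_on (layer n i) \<Longrightarrow> eigen_lift n i lam P \<in> funs_on (layer n i \<union> layer n (Suc i))"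
  using up_op_funs_on[of n i P] by (auto simp: funs_on_def eigen_lift_def)

lemma restr_eigen_lift_lower:
  "P \<in> funs_on (layer n i) \<Longrightarrow> restr (eigen_lift n i lam P) (layer n i) = P"
  using up_op_funs_on[of n i P] layer_disjoint[of "Suc i" i _ n]
  by (auto simp: funs_on_def eigen_lift_def restr_def fun_eq_iff)

lemma restr_eigen_lift_upper:
  "P \<in> funs_on (layer n i) \<Longrightarrow>
    restr (eigen_lift n i lam P) (layer n (Suc i)) = fscale (1 / lam) (up_op n i P)"
  using up_op_funs_on[of n i P] layer_disjoint[of i "Suc i" _ n]
  by (auto simp: funs_on_def eigen_lift_def restr_def fun_eq_iff)

locale layer_pair_eigenvalue =
  fixes n i t :: nat and lam :: real
  assumes below_half: "2 * Suc i \<le> n" and t_le: "t \<le> i"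
    and lam_sq: "lam * lam = du_eigenvalue n i t" and lam_nonzero: "lam \<noteq> 0"
begin

abbreviation "X \<equiv> layer n i \<union> layer n (Suc i)"

lemma eigsp_eq_image: "eigsp X lam = eigen_lift n i lam ` Vsp n i t"
proof (intro equalityI subsetI)
  fix f assume "f \<in> eigsp X lam"
  then have f: "f \<in> funs_on X" and eq: "adj_op X f = fscale lam f"
    by (auto simp: eigsp_def)
  define P where "P = restr f (layer n i)"
  define Q where "Q = restr f (layer n (Suc i))"
  have up: "up_op n i P = fscale lam Q" and down: "down_op n i Q = fscale lam P"
    unfolding P_def Q_def using adj_op_eigen_iff[OF f, of lam] eq by blast+
  have "down_op n i (up_op n i P) = fscale (du_eigenvalue n i t) P"
    using lam_sq by (simp add: up down down_op_scale fs.scale_scale)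
  moreover have "P \<in> Usp n i i"
    using Usp_full[of i i n] restr_funs_on by (simp add: P_def)
  ultimately have "P \<in> Vsp n i t"
    using Vsp_if_down_up_eigenvector[OF inj_on_du_eigenvalue[OF below_half] t_le] by blast
  moreover have "f = eigen_lift n i lam P"
    using funs_on_Un_eq_restr_add[OF f] up lam_nonzero layer_disjoint[of i "Suc i" _ n]
    by (auto simp: eigen_lift_def P_def Q_def fs.scale_scale)
  ultimately show "f \<in> eigen_lift n i lam ` Vsp n i t"
    by blast
next
  fix f assume "f \<in> eigen_lift n i lam ` Vsp n i t"
  then obtain P where P: "P \<in> Vsp n i t" and f_def: "f = eigen_lift n i lam P"
    by blast
  have P_funs: "P \<in> funs_on (layer n i)"
    using P Vsp_funs_on by blast
  have f: "f \<in> funs_on X"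
    unfolding f_def by (rule eigen_lift_funs_on[OF P_funs])
  have "down_op n i (fscale (1 / lam) (up_op n i P)) = fscale lam P"
    using down_up_Vsp[OF t_le P] lam_nonzero lam_sq[symmetric]
    by (simp add: down_op_scale fs.scale_scale)
  moreover have "up_op n i P = fscale lam (fscale (1 / lam) (up_op n i P))"
    using lam_nonzero by (simp add: fs.scale_scale)
  ultimately have "adj_op X f = fscale lam f"
    using adj_op_eigen_iff[OF f] unfolding f_def
    by (simp add: restr_eigen_lift_lower[OF P_funs] restr_eigen_lift_upper[OF P_funs])
  with f show "f \<in> eigsp X lam"
    by (simp add: eigsp_def)
qed

lemma dim_eigsp: "fdim (eigsp X lam) = fdim (Vsp n i t)"
proof -
  have "inj_on (eigen_lift n i lam) (Vsp n i t)"
  proof (rule inj_onI)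
    fix P P' assume "P \<in> Vsp n i t" "P' \<in> Vsp n i t" "eigen_lift n i lam P = eigen_lift n i lam P'"
    then show "P = P'"
      using restr_eigen_lift_lower[of P n i lam] restr_eigen_lift_lower[of P' n i lam] Vsp_funs_on
      by auto
  qed
  then show ?thesis
    unfolding eigsp_eq_image by (rule fs.dim_image_eq_of_inj_on[OF eigen_lift_linear subspace_Vsp])
qed

lemma eigsp_eq:
  "eigsp X lam = {f \<in> funs_on X. restr f (layer n i) \<in> Vsp n i t
      \<and> (\<forall>x \<in> layer n (Suc i). f x = (1 / lam) * (\<Sum>y\<in>{y \<in> layer n i. y \<subset> x}. f y))}"
proof -
  have upper: "(\<forall>x \<in> layer n (Suc i). f x = (1 / lam) * (\<Sum>y\<in>{y \<in> layer n i. y \<subset> x}. f y))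
      \<longleftrightarrow> restr f (layer n (Suc i)) = fscale (1 / lam) (up_op n i (restr f (layer n i)))" for f
  proof -
    have "{y \<in> layer n i. y \<subset> x} = {y \<in> layer n i. y \<subseteq> x}" if "x \<in> layer n (Suc i)" for x
      using that by (auto simp: layer_iff)
    then show ?thesis
      by (auto simp: fun_eq_iff restr_def up_op_def)
  qed
  show ?thesis
    unfolding eigsp_eq_image upper
  proof (intro equalityI subsetI)
    fix f assume "f \<in> eigen_lift n i lam ` Vsp n i t"
    then obtain P where P: "P \<in> Vsp n i t" and f: "f = eigen_lift n i lam P"
      by blast
    then have "P \<in> funs_on (layer n i)"
      using Vsp_funs_on by blast
    with P show "f \<in> {f \<in> funs_on X. restr f (layer n i) \<in> Vsp n i t
        \<and> restr f (layer n (Suc i)) = fscale (1 / lam) (up_op n i (restr f (layer n i)))}"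
      by (simp add: f eigen_lift_funs_on restr_eigen_lift_lower restr_eigen_lift_upper)
  next
    fix f assume "f \<in> {f \<in> funs_on X. restr f (layer n i) \<in> Vsp n i t
        \<and> restr f (layer n (Suc i)) = fscale (1 / lam) (up_op n i (restr f (layer n i)))}"
    then have f: "f \<in> funs_on X" and P: "restr f (layer n i) \<in> Vsp n i t"
      and Q: "restr f (layer n (Suc i)) = fscale (1 / lam) (up_op n i (restr f (layer n i)))"
      by auto
    have "f = eigen_lift n i lam (restr f (layer n i))"
      unfolding eigen_lift_def Q[symmetric] using f layer_Int_layer_Suc by (rule funs_on_Un_eq_restr_add)
    with P show "f \<in> eigen_lift n i lam ` Vsp n i t"
      by blast
  qed
qed

lemma restr_upper_in_Vsp: "f \<in> eigsp X lam \<Longrightarrow> restr f (layer n (Suc i)) \<in> Vsp n (Suc i) t"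
  unfolding eigsp_eq_image
  using restr_eigen_lift_upper Vsp_funs_on up_op_Vsp[OF t_le] fs.subspace_scale[OF subspace_Vsp]
  by fastforce

end

lemma Vsp_Suc_Suc_iff:
  "f \<in> Vsp n (Suc i) (Suc i) \<longleftrightarrow> f \<in> funs_on (layer n (Suc i)) \<and> down_op n i f = 0"
  using Vsp_Suc_iff[of f n "Suc i" i] Usp_full[of "Suc i" "Suc i" n]
    down_op_eq_0_iff_orthogonal[of f n i]
  by blast

lemma eigsp_0_eq:
  assumes below_half: "2 * Suc i \<le> n"
  shows "eigsp (layer n i \<union> layer n (Suc i)) 0 = Vsp n (Suc i) (Suc i)"
proof (intro equalityI subsetI)
  fix f assume "f \<in> eigsp (layer n i \<union> layer n (Suc i)) 0"
  then have f: "f \<in> funs_on (layer n i \<union> layer n (Suc i))"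
    and eq: "adj_op (layer n i \<union> layer n (Suc i)) f = fscale 0 f"
    by (auto simp: eigsp_def)
  define P where "P = restr f (layer n i)"
  define Q where "Q = restr f (layer n (Suc i))"
  have "up_op n i P = fscale 0 Q" "down_op n i Q = fscale 0 P"
    unfolding P_def Q_def using adj_op_eigen_iff[OF f, of 0] eq by blast+
  then have up: "up_op n i P = 0" and down: "down_op n i Q = 0"
    by (simp_all only: fs.scale_zero_left)
  have "P = 0"
    by (rule up_op_eq_0_imp_eq_0[of i n]) (use below_half up in \<open>simp_all add: P_def restr_funs_on\<close>)
  moreover have "Q \<in> Vsp n (Suc i) (Suc i)"
    using Vsp_Suc_Suc_iff restr_funs_on down by (simp add: Q_def)
  moreover have "f = P + Q"
    unfolding P_def Q_def using f layer_Int_layer_Suc by (rule funs_on_Un_eq_restr_add)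
  ultimately show "f \<in> Vsp n (Suc i) (Suc i)"
    by simp
next
  fix f assume "f \<in> Vsp n (Suc i) (Suc i)"
  then have f: "f \<in> funs_on (layer n (Suc i))" and down: "down_op n i f = 0"
    using Vsp_Suc_Suc_iff by blast+
  then have f_X: "f \<in> funs_on (layer n i \<union> layer n (Suc i))"
    by (simp add: funs_on_def)
  have "restr f (layer n i) = 0"
    using f layer_Int_layer_Suc by (auto simp: restr_def funs_on_def fun_eq_iff)
  moreover have "restr f (layer n (Suc i)) = f"
    using f by (rule restr_eq_self)
  ultimately have "adj_op (layer n i \<union> layer n (Suc i)) f = fscale 0 f"
    using adj_op_eigen_iff[OF f_X, of 0] down up_op_zero
    by (simp only: fs.scale_zero_left fs.scale_zero_right)
  with f_X show "f \<in> eigsp (layer n i \<union> layer n (Suc i)) 0"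
    by (simp add: eigsp_def)
qed

lemma Vsp_Suc_Suc_eq:
  "Vsp n (Suc i) (Suc i) = {f \<in> funs_on (layer n i \<union> layer n (Suc i)).
     (\<forall>x \<in> layer n i. f x = 0) \<and> restr f (layer n (Suc i)) \<in> Vsp n (Suc i) (Suc i)}"
proof -
  have upper: "f \<in> funs_on (layer n (Suc i)) \<longleftrightarrow>
      f \<in> funs_on (layer n i \<union> layer n (Suc i)) \<and> (\<forall>x \<in> layer n i. f x = 0)" for f
    using layer_Int_layer_Suc by (auto simp: funs_on_def)
  show ?thesis
  proof (intro equalityI subsetI)
    fix f assume "f \<in> Vsp n (Suc i) (Suc i)"
    moreover have "f \<in> funs_on (layer n (Suc i))"
      using calculation Vsp_funs_on by blast
    ultimately show "f \<in> {f \<in> funs_on (layer n i \<union> layer n (Suc i)).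
        (\<forall>x \<in> layer n i. f x = 0) \<and> restr f (layer n (Suc i)) \<in> Vsp n (Suc i) (Suc i)}"
      using upper[of f] by (simp add: restr_eq_self)
  next
    fix f assume f: "f \<in> {f \<in> funs_on (layer n i \<union> layer n (Suc i)).
        (\<forall>x \<in> layer n i. f x = 0) \<and> restr f (layer n (Suc i)) \<in> Vsp n (Suc i) (Suc i)}"
    then have "restr f (layer n (Suc i)) = f"
      using upper[of f] restr_eq_self by blast
    with f show "f \<in> Vsp n (Suc i) (Suc i)"
      by auto
  qed
qed

theorem corollary1p11:
  fixes n r :: nat
  assumes "1 \<le> r" and "2 * r \<le> n"
  defines "X \<equiv> layer n (r - 1) \<union> layer n r"
  defines "\<gamma> \<equiv> (\<lambda>t::nat. sqrt (real (r - t) * real (n - r - t + 1)))"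
  defines "mult \<equiv> (\<lambda>t::nat. int (n choose t) - (if t = 0 then 0 else int (n choose (t - 1))))"
  shows
    \<comment> \<open>(i)\<close>
    "(\<forall>t \<le> r - 1. int (fdim (eigsp X (\<gamma> t))) = mult t
                 \<and> int (fdim (eigsp X (- \<gamma> t))) = mult t)
     \<and> int (fdim (eigsp X 0)) = mult r
     \<comment> \<open>(ii)\<close>
     \<and> (\<forall>t \<le> r - 1. \<forall>lam \<in> {- \<gamma> t, \<gamma> t}.
          eigsp X lam =
            {f \<in> funs_on X. restr f (layer n (r - 1)) \<in> Vsp n (r - 1) t
               \<and> (\<forall>x \<in> layer n r. f x = (1 / lam) * (\<Sum>y\<in>{y \<in> layer n (r - 1). y \<subset> x}. f y))}
          \<and> (\<forall>f \<in> eigsp X lam. restr f (layer n r) \<in> Vsp n r t))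
     \<comment> \<open>(iii)\<close>
     \<and> eigsp X 0 =
         {f \<in> funs_on X. (\<forall>x \<in> layer n (r - 1). f x = 0) \<and> restr f (layer n r) \<in> Vsp n r r}"
proof -
  obtain i where r: "r = Suc i"
    using assms(1) by (cases r) auto
  have below_half: "2 * Suc i \<le> n" and X: "X = layer n i \<union> layer n (Suc i)"
    using assms(2) by (simp_all add: r X_def)
  have dim_Vsp_eq: "int (fdim (Vsp n j t)) = mult t" if "t \<le> j" "j \<le> Suc i" for j t
    using dim_Vsp[OF that(1)] that below_half by (simp add: mult_def)
  have pair: "layer_pair_eigenvalue n i t lam" if t: "t \<le> i" and lam: "lam \<in> {- \<gamma> t, \<gamma> t}" for t lam
  proof
    have "\<gamma> t = sqrt (du_eigenvalue n i t)"
      using du_eigenvalue_eq[OF t below_half] by (simp add: \<gamma>_def r)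
    then show "lam * lam = du_eigenvalue n i t" "lam \<noteq> 0"
      using lam du_eigenvalue_pos[OF t below_half] by auto
  qed (use below_half t in auto)
  show ?thesis
    unfolding X r diff_Suc_1
    by (intro conjI allI impI ballI; (simp del: fscale_apply add: eigsp_0_eq[OF below_half]
        layer_pair_eigenvalue.dim_eigsp[OF pair] dim_Vsp_eq)?)
      (simp_all add: layer_pair_eigenvalue.eigsp_eq[OF pair] layer_pair_eigenvalue.restr_upper_in_Vsp[OF pair]
        eigsp_0_eq[OF below_half] Vsp_Suc_Suc_eq[of n i, symmetric])
qed

end
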